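(* Fix $\alpha\in[0,1)$, $\beta\in(0,1)$, $Q=1-\alpha$, $S=1-\beta$. For the combined clumsy-careless collector, with $\mu_n^{\alpha,\beta}:=\mathbb P_{\nu_n^{\alpha,\beta}}(K_0<n,K_1=n)$ and $T_n^{\alpha,\beta}$ the first post-thinning completion time, there are constants $C,c\in(0,\infty)$ depending only on $\alpha,\beta$ such that for all sufficiently large $n$, \[\sup_{A\subseteq[n]}\mathbb P_A\left(\mu_n^{\alpha,\beta}T_n^{\alpha,\beta}>x\right)\le Ce^{-cx},\qquad x\ge0,\] where $\mathbb P_A$ denotes the process started from the set $A$ of present types. In particular this holds for the empty initial collection.
   Context: Combined clumsy-careless collector on $n$ types: the state is the set of present types. In each round one type is drawn uniformly from $[n]$ independently; it is refreshed to present with probability $Q$ and to absent with probability $\alpha$; then every currently present coupon is independently retained with probability $S$. Completion is checked after thinning: $T_n^{\alpha,\beta}=\inf\{t\ge0:\text{all } n \text{ types present at time } t\}$. $K_t$ is the number of present types; it is a Markov chain on $\{0,\dots,n\}$ (given $K_t=k$: with probability $k/n$, $K_{t+1}\sim\mathrm{Bin}(k-1,S)+\mathrm{Bernoulli}(QS)$; with probability $(n-k)/n$, $K_{t+1}\sim\mathrm{Bin}(k,S)+\mathrm{Bernoulli}(QS)$), irreducible and aperiodic with unique stationary law $\nu_n^{\alpha,\beta}$. *)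

theory Defs
  imports "HOL-Probability.Probability"
begin

text \<open>Types are {..<n}. Refresh probability Q = 1 - alpha, retention S = 1 - beta.\<close>

definition thin :: "real \<Rightarrow> nat set \<Rightarrow> nat set pmf" where
  "thin S A = map_pmf (\<lambda>f. {j\<in>A. f j}) (Pi_pmf A False (\<lambda>_. bernoulli_pmf S))"

definition cc_step :: "real \<Rightarrow> real \<Rightarrow> nat \<Rightarrow> nat set \<Rightarrow> nat set pmf" where
  "cc_step \<alpha> \<beta> n A =
     bind_pmf (pmf_of_set {..<n}) (\<lambda>i.
     bind_pmf (bernoulli_pmf (1 - \<alpha>)) (\<lambda>b.
       thin (1 - \<beta>) (if b then insert i A else A - {i})))"

text \<open>cc_surv m: probability, starting from A, that the collection is not complete at any
  of the times 0, 1, ..., m, i.e. P_A(T > m).\<close>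
primrec cc_surv :: "nat \<Rightarrow> real \<Rightarrow> real \<Rightarrow> nat \<Rightarrow> nat set \<Rightarrow> real" where
  "cc_surv 0 \<alpha> \<beta> n A = (if A = {..<n} then 0 else 1)"
| "cc_surv (Suc m) \<alpha> \<beta> n A = (if A = {..<n} then 0 else
      measure_pmf.expectation (cc_step \<alpha> \<beta> n A) (\<lambda>B. cc_surv m \<alpha> \<beta> n B))"

text \<open>Tail P_A(T > t) for real t \<ge> 0 (T is integer valued).\<close>
definition cc_tail :: "real \<Rightarrow> real \<Rightarrow> nat \<Rightarrow> nat set \<Rightarrow> real \<Rightarrow> real" where
  "cc_tail \<alpha> \<beta> n A t = cc_surv (nat \<lfloor>t\<rfloor>) \<alpha> \<beta> n A"

definition K_step :: "real \<Rightarrow> real \<Rightarrow> nat \<Rightarrow> nat \<Rightarrow> nat pmf" where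
  "K_step \<alpha> \<beta> n k =
     bind_pmf (bernoulli_pmf (real k / real n)) (\<lambda>p.
       map_pmf (\<lambda>(x, y). x + (if y then 1 else 0))
         (pair_pmf (binomial_pmf (if p then k - 1 else k) (1 - \<beta>))
                   (bernoulli_pmf ((1 - \<alpha>) * (1 - \<beta>)))))"

definition K_stat :: "real \<Rightarrow> real \<Rightarrow> nat \<Rightarrow> nat pmf" where
  "K_stat \<alpha> \<beta> n = (THE \<nu>. set_pmf \<nu> \<subseteq> {0..n} \<and> bind_pmf \<nu> (K_step \<alpha> \<beta> n) = \<nu>)"

definition cc_mu :: "real \<Rightarrow> real \<Rightarrow> nat \<Rightarrow> real" where
  "cc_mu \<alpha> \<beta> n = (\<Sum>k<n. pmf (K_stat \<alpha> \<beta> n) k * pmf (K_step \<alpha> \<beta> n k) n)"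

end

theory Submission
  imports Defs
begin

text \<open>The number of present types is itself a Markov chain, since the uniform draw and the
  independent thinning only see the count, so \<open>T\<close> is the hitting time of \<open>n\<close> for the count
  chain \<open>K\<close>. Every state jumps to \<open>0\<close> with probability at least \<open>(1 - Q S) \<beta>\<^sup>n\<close>; this Doeblin
  minorisation gives the unique stationary law \<open>\<nu>\<close>.

  Upper bound on \<open>\<mu>\<^sub>n\<close>: \<open>K\<close> moves up by at most one step, so balancing the flow across each cut
  gives \<open>\<nu>(j+1) d(j+1) \<le> \<nu>(j) u(j)\<close> with \<open>u\<close>, \<open>d\<close> the up and down probabilities. The down
  probabilities are \<open>1 - O(k (1-\<beta>)\<^sup>k)\<close>, so their product is bounded below uniformly in \<open>n\<close>, and
  \<open>\<mu>\<^sub>n = \<nu>(n-1) u(n-1) \<le> C \<Prod>\<^sub>i u(i)\<close>.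

  Lower bound on completion: the mean of \<open>K\<close> contracts by the factor \<open>1-\<beta>\<close> per round, and the
  probability of jumping to \<open>0\<close> is at least an affine decreasing function of the level, so after
  \<open>n\<close> rounds the chain is at \<open>0\<close> with probability bounded below, from any start. From \<open>0\<close> it
  climbs straight to \<open>n\<close> with probability \<open>\<Prod>\<^sub>i u(i)\<close>; these climbs, started at \<open>n\<close> different
  times, are disjoint events, so completion within \<open>3n\<close> rounds has probability at least
  \<open>c n \<Prod>\<^sub>i u(i) \<ge> c' n \<mu>\<^sub>n\<close>. The Markov property turns this into a geometric tail on the
  time scale \<open>1/\<mu>\<^sub>n\<close>.\<close>

section \<open>Binomial laws and elementary estimates\<close>

lemma pmf_map_Suc: "pmf (map_pmf Suc X) j = (if j = 0 then 0 else pmf X (j - 1))"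
proof (cases j)
  case 0
  then show ?thesis by (auto simp: pmf_map vimage_def measure_pmf_zero_iff)
next
  case (Suc i)
  then show ?thesis using pmf_map_inj'[of Suc X i] by simp
qed

definition binom_bern :: "real \<Rightarrow> real \<Rightarrow> nat \<Rightarrow> nat \<Rightarrow> real" where
  "binom_bern p q m j =
     q * (if j = 0 then 0 else pmf (binomial_pmf m p) (j - 1)) + (1 - q) * pmf (binomial_pmf m p) j"

lemma pmf_binomial_plus_bernoulli:
  assumes "0 \<le> q" "q \<le> 1"
  shows "pmf (map_pmf (\<lambda>(x, y). x + (if y then 1 else 0)) (pair_pmf (binomial_pmf m p) (bernoulli_pmf q))) j
       = binom_bern p q m j"
proof -
  have "map_pmf (\<lambda>(x, y). x + (if y then 1 else 0)) (pair_pmf (binomial_pmf m p) (bernoulli_pmf q))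
      = bind_pmf (bernoulli_pmf q) (\<lambda>y. map_pmf (\<lambda>x. x + (if y then 1 else 0)) (binomial_pmf m p))"
    unfolding pair_pmf_def map_pmf_def
    by (subst bind_commute_pmf) (simp add: bind_assoc_pmf bind_return_pmf)
  then show ?thesis
    unfolding binom_bern_def using assms
    by (simp add: pmf_bind pmf_map_Suc[symmetric] Suc_eq_plus1[symmetric] del: Suc_eq_plus1 cong: map_pmf_cong)
qed

lemma pmf_binomial_Suc:
  assumes "0 \<le> p" "p \<le> 1"
  shows "pmf (binomial_pmf (Suc m) p) j = binom_bern p p m j"
proof -
  have "binomial_pmf (Suc m) p
      = bind_pmf (bernoulli_pmf p) (\<lambda>b. map_pmf (\<lambda>k. (if b then 1 else 0) + k) (binomial_pmf m p))"
    using assms by (simp add: binomial_pmf_Suc map_pmf_def)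
  then show ?thesis
    unfolding binom_bern_def using assms by (simp add: pmf_bind pmf_map_Suc[symmetric] cong: map_pmf_cong)
qed

text \<open>A coin that is present with probability \<open>Q\<close> and then survives thinning with probability
  \<open>p\<close> is a single Bernoulli\<open>(Q p)\<close> coin.\<close>
lemma bernoulli_mix_binomial:
  assumes "0 \<le> p" "p \<le> 1" "0 \<le> Q" "Q \<le> 1"
  shows "bind_pmf (bernoulli_pmf Q) (\<lambda>b. binomial_pmf (if b then Suc m else m) p)
       = map_pmf (\<lambda>(x, y). x + (if y then 1 else 0)) (pair_pmf (binomial_pmf m p) (bernoulli_pmf (Q * p)))"
proof (rule pmf_eqI)
  fix j
  have "pmf (bind_pmf (bernoulli_pmf Q) (\<lambda>b. binomial_pmf (if b then Suc m else m) p)) j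
      = Q * binom_bern p p m j + (1 - Q) * pmf (binomial_pmf m p) j"
    using assms by (simp add: pmf_bind pmf_binomial_Suc del: pmf_binomial)
  also have "\<dots> = binom_bern p (Q * p) m j"
    unfolding binom_bern_def by (simp add: algebra_simps del: pmf_binomial)
  also have "\<dots> = pmf (map_pmf (\<lambda>(x, y). x + (if y then 1 else 0))
                        (pair_pmf (binomial_pmf m p) (bernoulli_pmf (Q * p)))) j"
    using assms by (intro pmf_binomial_plus_bernoulli[symmetric]) (auto simp: mult_le_one)
  finally show "pmf (bind_pmf (bernoulli_pmf Q) (\<lambda>b. binomial_pmf (if b then Suc m else m) p)) j
      = pmf (map_pmf (\<lambda>(x, y). x + (if y then 1 else 0))
               (pair_pmf (binomial_pmf m p) (bernoulli_pmf (Q * p)))) j" .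
qed

lemma binom_bern_0: "0 \<le> p \<Longrightarrow> p \<le> 1 \<Longrightarrow> binom_bern p q m 0 = (1 - q) * (1 - p) ^ m"
  by (simp add: binom_bern_def)

lemma binom_bern_top: "0 \<le> p \<Longrightarrow> p \<le> 1 \<Longrightarrow> binom_bern p q m (Suc m) = q * p ^ m"
  by (simp add: binom_bern_def)

lemma binom_bern_diag:
  "0 \<le> p \<Longrightarrow> p \<le> 1 \<Longrightarrow> binom_bern p q (Suc m) (Suc m) = q * real (Suc m) * p ^ m * (1 - p) + (1 - q) * p ^ Suc m"
  by (simp add: binom_bern_def)

lemma binom_bern_beyond: "0 \<le> p \<Longrightarrow> p \<le> 1 \<Longrightarrow> Suc m < j \<Longrightarrow> binom_bern p q m j = 0"
  by (simp add: binom_bern_def binomial_eq_0)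

lemma sum_shift_times_index:
  "(\<Sum>j\<le>Suc N. (if j = 0 then 0 else f (j - 1)) * real j) = (\<Sum>i\<le>N. f i * (real i + 1))"
  by (subst sum.atMost_Suc_shift) (simp add: algebra_simps)

lemma binom_bern_sum_times_index:
  assumes "0 \<le> p" "p \<le> 1" "m \<le> N"
  shows "(\<Sum>j\<le>Suc N. binom_bern p q m j * real j) = (\<Sum>j\<le>N. pmf (binomial_pmf m p) j * real j) + q"
proof -
  have binomial_sum: "(\<Sum>j\<le>N. pmf (binomial_pmf m p) j) = 1"
    using assms by (intro sum_pmf_eq_1) (auto simp: set_pmf_binomial_eq)
  have "(\<Sum>j\<le>Suc N. pmf (binomial_pmf m p) j * real j) = (\<Sum>j\<le>N. pmf (binomial_pmf m p) j * real j)"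
    using assms by simp
  then show ?thesis
    unfolding binom_bern_def distrib_right sum.distrib mult.assoc sum_distrib_left[symmetric]
      sum_shift_times_index
    by (simp add: distrib_left sum.distrib binomial_sum algebra_simps)
qed

lemma binomial_mean_sum:
  assumes "0 \<le> p" "p \<le> 1" "m \<le> N"
  shows "(\<Sum>j\<le>N. pmf (binomial_pmf m p) j * real j) = real m * p"
  using assms(3)
proof (induction m arbitrary: N)
  case 0
  then show ?case using assms by (auto simp: binomial_eq_0 intro!: sum.neutral)
next
  case (Suc m)
  then obtain N' where N: "N = Suc N'" "m \<le> N'" by (cases N) auto
  have "(\<Sum>j\<le>N. pmf (binomial_pmf (Suc m) p) j * real j) = (\<Sum>j\<le>Suc N'. binom_bern p p m j * real j)"
    unfolding N(1) using assms by (simp add: pmf_binomial_Suc del: pmf_binomial)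
  also have "\<dots> = real m * p + p"
    using binom_bern_sum_times_index[OF assms(1,2) N(2)] Suc.IH[OF N(2)] by simp
  finally show ?case by (simp add: algebra_simps)
qed

lemma binom_bern_mean_sum:
  assumes "0 \<le> p" "p \<le> 1" "Suc m \<le> N"
  shows "(\<Sum>j\<le>N. binom_bern p q m j * real j) = real m * p + q"
proof -
  obtain N' where "N = Suc N'" "m \<le> N'" using assms by (cases N) auto
  then show ?thesis using binom_bern_sum_times_index binomial_mean_sum assms by simp
qed

lemma summable_affine_times_geometric:
  fixes S :: real
  assumes "0 < S" "S < 1"
  shows "summable (\<lambda>i. (real i + 2) * S ^ i)"
proof -
  define r where "r = sqrt S"
  have r: "0 < r" "r < 1" "r * r = S" using assms unfolding r_def by auto
  have "(\<lambda>i. of_nat i * r ^ i) \<longlonglongrightarrow> 0" using r by (intro powser_times_n_limit_0) auto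
  then have "eventually (\<lambda>i. real i * r ^ i < 1) sequentially"
    by (rule order_tendstoD(2)) simp
  then have "eventually (\<lambda>i. norm ((real i + 2) * S ^ i) \<le> r ^ i + 2 * S ^ i) sequentially"
  proof eventually_elim
    case (elim i)
    have "(real i + 2) * S ^ i = (real i * r ^ i) * r ^ i + 2 * S ^ i"
      using r by (simp add: power_mult_distrib[symmetric] algebra_simps)
    also have "\<dots> \<le> 1 * r ^ i + 2 * S ^ i" using elim r by (intro add_right_mono mult_right_mono) auto
    finally show ?case using assms by simp
  qed
  moreover have "summable (\<lambda>i. r ^ i + 2 * S ^ i)"
    using r assms by (intro summable_add summable_mult summable_geometric) auto
  ultimately show ?thesis by (rule summable_comparison_test_ev)
qed

lemma one_minus_power_times_le:
  fixes b :: real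
  assumes "0 < b" "b < 1" "1 \<le> k"
  shows "(1 - b) ^ k * (1 + real k * b) \<le> 1 - b\<^sup>2"
  using assms(3)
proof (induction k rule: dec_induct)
  case base
  then show ?case by (simp add: algebra_simps power2_eq_square)
next
  case (step k)
  have "(1 - b) ^ Suc k * (1 + real (Suc k) * b) = (1 - b) ^ k * ((1 - b) * (1 + real (Suc k) * b))"
    by simp
  also have "\<dots> \<le> (1 - b) ^ k * (1 + real k * b)"
    using assms by (intro mult_left_mono) (simp_all add: algebra_simps)
  finally show ?case using step.IH by simp
qed

section \<open>The count chain\<close>

lemma map_mem_pmf_of_set:
  assumes "finite B" "B \<noteq> {}"
  shows "map_pmf (\<lambda>x. x \<in> A) (pmf_of_set B) = bernoulli_pmf (card (A \<inter> B) / card B)"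
proof (rule pmf_eqI)
  fix b
  have "spmf_of_set B = spmf_of_pmf (pmf_of_set B)"
    unfolding spmf_of_set_def using assms by simp
  then have "spmf_of_pmf (map_pmf (\<lambda>x. x \<in> A) (pmf_of_set B)) = map_spmf (\<lambda>x. x \<in> A) (spmf_of_set B)"
    by simp
  also have "\<dots> = spmf_of_pmf (bernoulli_pmf (card (A \<inter> B) / card B))"
    by (rule map_mem_spmf_of_set[OF assms])
  finally show "pmf (map_pmf (\<lambda>x. x \<in> A) (pmf_of_set B)) b = pmf (bernoulli_pmf (card (A \<inter> B) / card B)) b"
    by (metis spmf_spmf_of_pmf)
qed

lemma pmf_K_step:
  assumes "0 \<le> \<alpha>" "\<alpha> \<le> 1" "0 \<le> \<beta>" "\<beta> \<le> 1" "k \<le> n"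
  shows "pmf (K_step \<alpha> \<beta> n k) j
       = real k / real n * binom_bern (1 - \<beta>) ((1 - \<alpha>) * (1 - \<beta>)) (k - 1) j
         + (1 - real k / real n) * binom_bern (1 - \<beta>) ((1 - \<alpha>) * (1 - \<beta>)) k j"
proof -
  have "0 \<le> (1 - \<alpha>) * (1 - \<beta>)" "(1 - \<alpha>) * (1 - \<beta>) \<le> 1"
    using assms by (simp_all add: mult_le_one)
  moreover have "real k / real n \<le> 1" using assms(5) by (cases "n = 0") auto
  ultimately show ?thesis
    unfolding K_step_def using assms by (simp add: pmf_bind pmf_binomial_plus_bernoulli)
qed

lemma set_pmf_K_step:
  assumes "0 \<le> \<beta>" "\<beta> \<le> 1"
  shows "set_pmf (K_step \<alpha> \<beta> n k) \<subseteq> {..Suc k}"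
  unfolding K_step_def using assms by (auto simp: set_pmf_binomial_eq split: if_splits)

lemma map_card_thin:
  assumes "finite X" "0 \<le> p" "p \<le> 1"
  shows "map_pmf card (thin p X) = binomial_pmf (card X) p"
  using binomial_pmf_altdef'[OF assms(1) refl, of p False] assms
  by (simp add: thin_def pmf.map_comp o_def)

lemma map_card_cc_step:
  assumes "0 \<le> \<alpha>" "\<alpha> \<le> 1" "0 \<le> \<beta>" "\<beta> \<le> 1" "0 < n" "A \<subseteq> {..<n}"
  shows "map_pmf card (cc_step \<alpha> \<beta> n A) = K_step \<alpha> \<beta> n (card A)"
proof -
  define B where "B m = map_pmf (\<lambda>(x, y). x + (if y then 1 else 0))
    (pair_pmf (binomial_pmf m (1 - \<beta>)) (bernoulli_pmf ((1 - \<alpha>) * (1 - \<beta>))))" for m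
  have fin: "finite A" using assms(6) finite_subset by blast
  have "map_pmf card (cc_step \<alpha> \<beta> n A) = bind_pmf (pmf_of_set {..<n}) (\<lambda>i.
      bind_pmf (bernoulli_pmf (1 - \<alpha>)) (\<lambda>b. binomial_pmf (card (if b then insert i A else A - {i})) (1 - \<beta>)))"
    unfolding cc_step_def map_bind_pmf using fin assms by (simp add: map_card_thin)
  also have "\<dots> = bind_pmf (pmf_of_set {..<n}) (\<lambda>i. B (card (A - {i})))"
  proof (intro bind_pmf_cong refl)
    fix i
    have "card (insert i A) = Suc (card (A - {i}))"
      using fin by (metis card_insert_disjoint finite_Diff insert_Diff_single Diff_iff singletonI)
    then have "(\<lambda>b. binomial_pmf (card (if b then insert i A else A - {i})) (1 - \<beta>))
        = (\<lambda>b. binomial_pmf (if b then Suc (card (A - {i})) else card (A - {i})) (1 - \<beta>))"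
      by auto
    then show "bind_pmf (bernoulli_pmf (1 - \<alpha>))
        (\<lambda>b. binomial_pmf (card (if b then insert i A else A - {i})) (1 - \<beta>)) = B (card (A - {i}))"
      unfolding B_def using assms by (simp add: bernoulli_mix_binomial mult.commute)
  qed
  also have "\<dots> = bind_pmf (map_pmf (\<lambda>i. i \<in> A) (pmf_of_set {..<n}))
      (\<lambda>p. B (if p then card A - 1 else card A))"
    using fin by (simp add: bind_map_pmf card_Diff_singleton_if cong: if_cong)
  also have "map_pmf (\<lambda>i. i \<in> A) (pmf_of_set {..<n}) = bernoulli_pmf (card A / n)"
    using map_mem_pmf_of_set[of "{..<n}" A] assms(5,6) by (simp add: Int_absorb2 lessThan_empty_iff)
  finally show ?thesis unfolding K_step_def B_def .
qed

section \<open>Stationary laws of finite kernels\<close>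

lemma pmf_bind_atMost:
  fixes \<nu> :: "nat pmf"
  assumes "set_pmf \<nu> \<subseteq> {..N}"
  shows "pmf (bind_pmf \<nu> K) j = (\<Sum>i\<le>N. pmf \<nu> i * pmf (K i) j)"
  unfolding pmf_bind using assms
  by (subst integral_measure_pmf_real[where A = "{..N}"]) (auto simp: mult.commute)

locale doeblin_kernel =
  fixes K :: "nat \<Rightarrow> nat pmf" and N :: nat and \<delta> :: real
  assumes set_pmf_K: "\<And>i. i \<le> N \<Longrightarrow> set_pmf (K i) \<subseteq> {..N}"
    and pmf_K_0_ge: "\<And>i. i \<le> N \<Longrightarrow> \<delta> \<le> pmf (K i) 0"
    and \<delta>_pos: "0 < \<delta>"
begin

definition push :: "(nat \<Rightarrow> real) \<Rightarrow> nat \<Rightarrow> real" where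
  "push v j = (\<Sum>i\<le>N. v i * pmf (K i) j)"

lemma \<delta>_le_1: "\<delta> \<le> 1"
  using pmf_K_0_ge[of 0] pmf_le_1[of "K 0" 0] by simp

lemma sum_pmf_K: "i \<le> N \<Longrightarrow> (\<Sum>j\<le>N. pmf (K i) j) = 1"
  using set_pmf_K by (intro sum_pmf_eq_1) auto

lemma push_nonneg: "(\<And>i. i \<le> N \<Longrightarrow> 0 \<le> v i) \<Longrightarrow> 0 \<le> push v j"
  unfolding push_def by (intro sum_nonneg mult_nonneg_nonneg) auto

lemma sum_push: "(\<Sum>j\<le>N. push v j) = (\<Sum>i\<le>N. v i)"
proof -
  have "(\<Sum>j\<le>N. push v j) = (\<Sum>i\<le>N. v i * (\<Sum>j\<le>N. pmf (K i) j))"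
    unfolding push_def by (subst sum.swap) (simp add: sum_distrib_left)
  then show ?thesis using sum_pmf_K by simp
qed

lemma push_diff: "push (\<lambda>j. u j - v j) j = push u j - push v j"
  unfolding push_def by (simp add: left_diff_distrib sum_subtractf)

text \<open>Removing mass \<open>\<delta>\<close> from column \<open>0\<close> leaves a nonnegative kernel of total mass \<open>1 - \<delta>\<close>
  in every row, and a vector of total sum zero does not see the removed part.\<close>
lemma push_contraction:
  assumes "(\<Sum>i\<le>N. d i) = 0"
  shows "(\<Sum>j\<le>N. \<bar>push d j\<bar>) \<le> (1 - \<delta>) * (\<Sum>i\<le>N. \<bar>d i\<bar>)"
proof -
  define R where "R i j = pmf (K i) j - (if j = 0 then \<delta> else 0)" for i j
  have R_nonneg: "i \<le> N \<Longrightarrow> 0 \<le> R i j" for i j using pmf_K_0_ge unfolding R_def by auto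
  have push_R: "push d j = (\<Sum>i\<le>N. d i * R i j)" for j
    using assms unfolding R_def push_def
    by (simp add: right_diff_distrib sum_subtractf sum_distrib_right[symmetric])
  have "(\<Sum>j\<le>N. \<bar>push d j\<bar>) \<le> (\<Sum>j\<le>N. \<Sum>i\<le>N. \<bar>d i\<bar> * R i j)"
    unfolding push_R
    by (intro sum_mono order.trans[OF sum_abs]) (simp add: abs_mult R_nonneg)
  also have "\<dots> = (\<Sum>i\<le>N. \<bar>d i\<bar> * (\<Sum>j\<le>N. R i j))"
    by (subst sum.swap) (simp add: sum_distrib_left)
  also have "\<dots> = (\<Sum>i\<le>N. \<bar>d i\<bar> * (1 - \<delta>))"
    unfolding R_def by (intro sum.cong refl) (simp add: sum_subtractf sum_pmf_K)
  finally show ?thesis by (simp add: sum_distrib_left mult.commute)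
qed

lemma stationary_fixed:
  assumes "set_pmf \<nu> \<subseteq> {..N}" "bind_pmf \<nu> K = \<nu>"
  shows "push (pmf \<nu>) j = pmf \<nu> j"
  using pmf_bind_atMost[OF assms(1), of K j] assms(2) unfolding push_def by simp

lemma stationary_unique:
  assumes "set_pmf \<nu>1 \<subseteq> {..N}" "bind_pmf \<nu>1 K = \<nu>1"
    and "set_pmf \<nu>2 \<subseteq> {..N}" "bind_pmf \<nu>2 K = \<nu>2"
  shows "\<nu>1 = \<nu>2"
proof (rule pmf_eqI)
  fix j
  define d where "d i = pmf \<nu>1 i - pmf \<nu>2 i" for i
  have "(\<Sum>i\<le>N. pmf \<nu>1 i) = 1" "(\<Sum>i\<le>N. pmf \<nu>2 i) = 1"
    using assms(1,3) by (auto intro!: sum_pmf_eq_1)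
  then have "(\<Sum>i\<le>N. d i) = 0" unfolding d_def by (simp add: sum_subtractf)
  moreover have "push d = d"
    using stationary_fixed[OF assms(1,2)] stationary_fixed[OF assms(3,4)]
    unfolding d_def by (simp add: push_diff fun_eq_iff)
  ultimately have "(\<Sum>j\<le>N. \<bar>d j\<bar>) \<le> (1 - \<delta>) * (\<Sum>j\<le>N. \<bar>d j\<bar>)"
    using push_contraction by metis
  then have "\<delta> * (\<Sum>j\<le>N. \<bar>d j\<bar>) \<le> 0" by (simp add: algebra_simps)
  then have "(\<Sum>j\<le>N. \<bar>d j\<bar>) \<le> 0"
    using \<delta>_pos by (simp add: mult_le_0_iff)
  then have "(\<Sum>j\<le>N. \<bar>d j\<bar>) = 0"
    by (intro antisym sum_nonneg) auto
  then have "j \<le> N \<Longrightarrow> d j = 0" by (simp add: sum_nonneg_eq_0_iff)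
  moreover have "\<not> j \<le> N \<Longrightarrow> pmf \<nu>1 j = 0 \<and> pmf \<nu>2 j = 0"
    using assms(1,3) by (auto simp: set_pmf_eq)
  ultimately show "pmf \<nu>1 j = pmf \<nu>2 j" unfolding d_def by force
qed

definition iter :: "nat \<Rightarrow> nat \<Rightarrow> real" where
  "iter t = (push ^^ t) (\<lambda>j. if j = 0 then 1 else 0)"

lemma iter_Suc: "iter (Suc t) = push (iter t)"
  unfolding iter_def by simp

lemma iter_nonneg: "0 \<le> iter t j"
  by (induction t arbitrary: j) (auto simp: iter_def intro!: push_nonneg)

lemma sum_iter: "(\<Sum>j\<le>N. iter t j) = 1"
  by (induction t) (simp_all add: iter_def sum_push)

lemma iter_increment_bound: "(\<Sum>j\<le>N. \<bar>iter (Suc t) j - iter t j\<bar>) \<le> 2 * (1 - \<delta>) ^ t"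
proof (induction t)
  case 0
  have "(\<Sum>j\<le>N. \<bar>iter 1 j - iter 0 j\<bar>) \<le> (\<Sum>j\<le>N. iter 1 j + iter 0 j)"
    using iter_nonneg by (intro sum_mono) (simp add: abs_le_iff)
  then show ?case by (simp add: sum.distrib sum_iter)
next
  case (Suc t)
  have "(\<Sum>j\<le>N. \<bar>iter (Suc (Suc t)) j - iter (Suc t) j\<bar>)
      = (\<Sum>j\<le>N. \<bar>push (\<lambda>j. iter (Suc t) j - iter t j) j\<bar>)"
    by (simp add: iter_Suc[of "Suc t"] iter_Suc[of t] push_diff)
  also have "\<dots> \<le> (1 - \<delta>) * (\<Sum>j\<le>N. \<bar>iter (Suc t) j - iter t j\<bar>)"
    by (rule push_contraction) (simp add: sum_subtractf sum_iter)
  also have "\<dots> \<le> (1 - \<delta>) * (2 * (1 - \<delta>) ^ t)"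
    using Suc.IH \<delta>_le_1 by (intro mult_left_mono) auto
  finally show ?case by simp
qed

lemma iter_convergent:
  assumes "j \<le> N"
  shows "convergent (\<lambda>t. iter t j)"
proof -
  have increment: "\<bar>iter (Suc t) j - iter t j\<bar> \<le> 2 * (1 - \<delta>) ^ t" for t
    using member_le_sum[of j "{..N}" "\<lambda>j. \<bar>iter (Suc t) j - iter t j\<bar>"] iter_increment_bound[of t] assms
    by simp
  have "summable (\<lambda>t. 2 * (1 - \<delta>) ^ t)"
    by (rule summable_mult[OF summable_geometric]) (use \<delta>_pos \<delta>_le_1 in auto)
  then have "summable (\<lambda>t. iter (Suc t) j - iter t j)"
    by (rule summable_comparison_test') (use increment in auto)
  then have "convergent (\<lambda>t. iter t j - iter 0 j)"
    by (simp add: summable_iff_convergent sum_lessThan_telescope[of "\<lambda>t. iter t j"])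
  then show ?thesis by (simp only: convergent_diff_const_right_iff)
qed

lemma stationary_of_fixed_vector:
  assumes nonneg: "\<And>j. 0 \<le> \<pi> j" and supp: "\<And>j. N < j \<Longrightarrow> \<pi> j = 0"
    and sum_1: "(\<Sum>j\<le>N. \<pi> j) = 1" and fixed: "\<And>j. j \<le> N \<Longrightarrow> push \<pi> j = \<pi> j"
  shows "\<exists>\<nu>. set_pmf \<nu> \<subseteq> {..N} \<and> bind_pmf \<nu> K = \<nu>"
proof -
  define \<nu> where "\<nu> = embed_pmf \<pi>"
  have "(\<integral>\<^sup>+j. ennreal (\<pi> j) \<partial>count_space UNIV) = (\<Sum>j\<le>N. ennreal (\<pi> j))"
    using supp by (intro nn_integral_count_space') (auto simp: not_le)
  also have "\<dots> = 1" using sum_1 nonneg by (simp add: sum_ennreal)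
  finally have pmf_\<nu>: "pmf \<nu> = \<pi>"
    unfolding \<nu>_def using nonneg by (simp add: pmf_embed_pmf fun_eq_iff)
  have set_\<nu>: "set_pmf \<nu> \<subseteq> {..N}"
  proof
    fix j
    assume "j \<in> set_pmf \<nu>"
    then have "\<pi> j \<noteq> 0" by (simp add: set_pmf_iff pmf_\<nu>)
    then show "j \<in> {..N}" using supp[of j] by fastforce
  qed
  have "bind_pmf \<nu> K = \<nu>"
  proof (rule pmf_eqI)
    fix j
    show "pmf (bind_pmf \<nu> K) j = pmf \<nu> j"
    proof (cases "j \<le> N")
      case True
      then show ?thesis
        using fixed unfolding pmf_bind_atMost[OF set_\<nu>] pmf_\<nu> push_def by simp
    next
      case False
      then have "pmf (K i) j = 0" if "i \<le> N" for i
        using set_pmf_K[OF that] by (auto simp: set_pmf_eq)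
      then show ?thesis
        using False supp unfolding pmf_bind_atMost[OF set_\<nu>] pmf_\<nu> by simp
    qed
  qed
  with set_\<nu> show ?thesis by blast
qed

lemma stationary_exists: "\<exists>\<nu>. set_pmf \<nu> \<subseteq> {..N} \<and> bind_pmf \<nu> K = \<nu>"
proof (rule stationary_of_fixed_vector)
  define \<pi> where "\<pi> j = (if j \<le> N then lim (\<lambda>t. iter t j) else 0)" for j
  have lim_iter: "(\<lambda>t. iter t j) \<longlonglongrightarrow> \<pi> j" if "j \<le> N" for j
    using iter_convergent[OF that] that by (simp add: \<pi>_def convergent_LIMSEQ_iff)
  show "0 \<le> \<pi> j" for j
    using LIMSEQ_le_const[OF lim_iter, of j] iter_nonneg by (auto simp: \<pi>_def)
  show "N < j \<Longrightarrow> \<pi> j = 0" for j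
    by (simp add: \<pi>_def)
  have "(\<lambda>t. \<Sum>j\<le>N. iter t j) \<longlonglongrightarrow> (\<Sum>j\<le>N. \<pi> j)"
    by (intro tendsto_sum lim_iter) auto
  then show "(\<Sum>j\<le>N. \<pi> j) = 1"
    unfolding sum_iter by (simp add: LIMSEQ_const_iff)
  show "push \<pi> j = \<pi> j" if "j \<le> N" for j
  proof -
    have "(\<lambda>t. iter (Suc t) j) \<longlonglongrightarrow> push \<pi> j"
      unfolding iter_Suc push_def by (intro tendsto_sum tendsto_mult_right lim_iter) auto
    moreover have "(\<lambda>t. iter (Suc t) j) \<longlonglongrightarrow> \<pi> j"
      using lim_iter[OF that] by (rule LIMSEQ_Suc)
    ultimately show ?thesis by (rule LIMSEQ_unique)
  qed
qed

lemma ex1_stationary: "\<exists>!\<nu>. set_pmf \<nu> \<subseteq> {0..N} \<and> bind_pmf \<nu> K = \<nu>"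
  using stationary_exists stationary_unique by (metis atLeast0AtMost)

end

text \<open>Balance of the probability flow across the cut between \<open>{..j}\<close> and \<open>{Suc j..}\<close>: for a
  chain that moves up by at most one step, the only upward flow is from \<open>j\<close> to \<open>Suc j\<close>.\<close>
lemma stationary_cut_flow:
  fixes K :: "nat \<Rightarrow> nat pmf"
  assumes skip_free: "\<And>i. set_pmf (K i) \<subseteq> {..Suc i}"
    and supp: "set_pmf \<nu> \<subseteq> {..N}" and stat: "bind_pmf \<nu> K = \<nu>" and "j < N"
  shows "pmf \<nu> (Suc j) * (\<Sum>i\<le>j. pmf (K (Suc j)) i) \<le> pmf \<nu> j * pmf (K j) (Suc j)"
proof -
  define C where "C i = (\<Sum>j'\<le>j. pmf (K i) j')" for i
  have C_nonneg: "0 \<le> C i" for i unfolding C_def by (intro sum_nonneg) auto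
  have C_below: "C i = 1" if "i < j" for i
    unfolding C_def using skip_free[of i] that by (intro sum_pmf_eq_1) auto
  have "(\<Sum>j'\<le>Suc j. pmf (K j) j') = 1"
    using skip_free[of j] by (intro sum_pmf_eq_1) auto
  then have C_at: "C j = 1 - pmf (K j) (Suc j)" unfolding C_def by simp
  have split: "(\<Sum>i\<le>N. f i) = (\<Sum>i<j. f i) + f j + (\<Sum>i\<in>{Suc j..N}. f i)" for f :: "nat \<Rightarrow> real"
  proof -
    have "(\<Sum>i\<le>N. f i) = sum f ({..<Suc j} \<union> {Suc j..N})"
      using \<open>j < N\<close> by (intro sum.cong) auto
    also have "\<dots> = sum f {..<Suc j} + (\<Sum>i\<in>{Suc j..N}. f i)"
      by (rule sum.union_disjoint) auto
    also have "sum f {..<Suc j} = (\<Sum>i<j. f i) + f j"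
      by (rule sum.lessThan_Suc)
    finally show ?thesis .
  qed
  have "(\<Sum>j'\<le>j. pmf \<nu> j') = (\<Sum>j'\<le>j. pmf (bind_pmf \<nu> K) j')"
    by (simp only: stat)
  also have "\<dots> = (\<Sum>j'\<le>j. \<Sum>i\<le>N. pmf \<nu> i * pmf (K i) j')"
    by (simp only: pmf_bind_atMost[OF supp])
  also have "\<dots> = (\<Sum>i\<le>N. pmf \<nu> i * C i)"
    unfolding C_def by (subst sum.swap) (simp add: sum_distrib_left)
  also have "\<dots> = (\<Sum>i<j. pmf \<nu> i) + pmf \<nu> j * (1 - pmf (K j) (Suc j))
      + (\<Sum>i\<in>{Suc j..N}. pmf \<nu> i * C i)"
    unfolding split by (simp add: C_below C_at)
  finally have "pmf \<nu> j * pmf (K j) (Suc j) = (\<Sum>i\<in>{Suc j..N}. pmf \<nu> i * C i)"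
    by (simp add: lessThan_Suc_atMost[symmetric] algebra_simps)
  moreover have "pmf \<nu> (Suc j) * C (Suc j) \<le> (\<Sum>i\<in>{Suc j..N}. pmf \<nu> i * C i)"
    using \<open>j < N\<close> C_nonneg by (intro member_le_sum) auto
  ultimately show ?thesis unfolding C_def by simp
qed

section \<open>Parameters and one-step estimates\<close>

locale cc_params =
  fixes \<alpha> \<beta> :: real
  assumes \<alpha>_nonneg: "0 \<le> \<alpha>" and \<alpha>_less_1: "\<alpha> < 1"
    and \<beta>_pos: "0 < \<beta>" and \<beta>_less_1: "\<beta> < 1"
begin

definition QS :: real where
  "QS = (1 - \<alpha>) * (1 - \<beta>)"

lemma QS_nonneg: "0 \<le> QS"
  using \<alpha>_less_1 \<beta>_less_1 by (simp add: QS_def)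

lemma QS_le: "QS \<le> 1 - \<beta>"
  using \<alpha>_nonneg \<alpha>_less_1 \<beta>_less_1 unfolding QS_def by (intro mult_left_le_one_le) auto

lemma QS_less_1: "QS < 1"
  using QS_le \<beta>_pos by linarith

definition down_exponent :: real where
  "down_exponent = (\<Sum>i. (real i + 2) * (1 - \<beta>) ^ i) / \<beta>\<^sup>2"

text \<open>From every level \<open>k \<le> zero_level\<close> the chain jumps to \<open>0\<close> with probability at least
  \<open>zero_floor\<close>; the level is large enough that the long-run mean bound \<open>1 + 1/\<beta>\<close> stays below
  half of it.\<close>
definition zero_level :: nat where
  "zero_level = nat \<lceil>2 * (1 + 1 / \<beta>)\<rceil>"

definition zero_floor :: real where
  "zero_floor = (1 - QS) * \<beta> ^ zero_level"

lemma zero_level_ge: "2 * (1 + 1 / \<beta>) \<le> real zero_level"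
  unfolding zero_level_def using \<beta>_pos by linarith

lemma zero_level_pos: "0 < zero_level"
  using zero_level_ge \<beta>_pos by (smt (verit) divide_pos_pos of_nat_0_less_iff)

lemma zero_floor_pos: "0 < zero_floor"
  unfolding zero_floor_def using QS_less_1 \<beta>_pos by simp

lemma zero_floor_le_1: "zero_floor \<le> 1"
  unfolding zero_floor_def using QS_nonneg QS_less_1 \<beta>_pos \<beta>_less_1
  by (intro mult_le_one power_le_one) auto

text \<open>Completion within \<open>3 n\<close> rounds has probability at least \<open>n climb zero_floor / 4\<close>, while
  \<open>\<mu>\<^sub>n \<le> climb exp down_exponent\<close>.\<close>
definition tail_rate :: real where
  "tail_rate = zero_floor / (12 * exp down_exponent)"

lemma tail_rate_pos: "0 < tail_rate"
  unfolding tail_rate_def using zero_floor_pos by simp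

end

locale cc_chain = cc_params +
  fixes n :: nat
  assumes n_pos: "0 < n"
begin

abbreviation P :: "nat \<Rightarrow> nat \<Rightarrow> real" where
  "P i j \<equiv> pmf (K_step \<alpha> \<beta> n i) j"

lemma P_eq:
  "k \<le> n \<Longrightarrow> P k j = real k / real n * binom_bern (1 - \<beta>) QS (k - 1) j
                        + (1 - real k / real n) * binom_bern (1 - \<beta>) QS k j"
  using pmf_K_step[of \<alpha> \<beta> k n j] \<alpha>_nonneg \<alpha>_less_1 \<beta>_pos \<beta>_less_1 by (simp add: QS_def)

lemma set_pmf_K_step_Suc: "set_pmf (K_step \<alpha> \<beta> n k) \<subseteq> {..Suc k}"
  using set_pmf_K_step \<beta>_pos \<beta>_less_1 by simp

lemma P_up: "k \<le> n \<Longrightarrow> P k (Suc k) = (1 - real k / real n) * QS * (1 - \<beta>) ^ k"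
  using \<beta>_pos \<beta>_less_1 by (cases k) (simp_all add: P_eq binom_bern_beyond binom_bern_top)

lemma set_pmf_K_step_le_n:
  assumes "k \<le> n"
  shows "set_pmf (K_step \<alpha> \<beta> n k) \<subseteq> {..n}"
proof
  fix j
  assume j: "j \<in> set_pmf (K_step \<alpha> \<beta> n k)"
  then have "j \<le> Suc k" using set_pmf_K_step_Suc by auto
  moreover have "j \<noteq> Suc n"
  proof
    assume "j = Suc n"
    with \<open>j \<le> Suc k\<close> assms have "k = n" by simp
    with j \<open>j = Suc n\<close> show False using P_up[of n] n_pos by (simp add: set_pmf_eq)
  qed
  ultimately show "j \<in> {..n}" using assms by auto
qed

lemma P_beyond: "k \<le> n \<Longrightarrow> n < j \<Longrightarrow> P k j = 0"
  using set_pmf_K_step_le_n[of k] by (auto simp: set_pmf_iff)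

lemma P_zero_ge: "k \<le> n \<Longrightarrow> (1 - QS) * \<beta> ^ k \<le> P k 0"
proof -
  assume "k \<le> n"
  then have t: "0 \<le> real k / real n" "real k / real n \<le> 1" using n_pos by auto
  have "\<beta> ^ k \<le> \<beta> ^ (k - 1)"
    using \<beta>_pos \<beta>_less_1 by (intro power_decreasing) auto
  then have "real k / real n * ((1 - QS) * \<beta> ^ k) \<le> real k / real n * ((1 - QS) * \<beta> ^ (k - 1))"
    using t QS_less_1 by (intro mult_left_mono) auto
  then show ?thesis
    using \<open>k \<le> n\<close> \<beta>_pos \<beta>_less_1 by (simp add: P_eq binom_bern_0 algebra_simps)
qed

lemma P_stay_or_up_le:
  assumes "1 \<le> k" "k \<le> n"
  shows "P k k + P k (Suc k) \<le> 1 - \<beta>\<^sup>2"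
    and "P k k + P k (Suc k) \<le> real (Suc k) * (1 - \<beta>) ^ (k - 1)"
proof -
  define S where "S = 1 - \<beta>"
  define t where "t = real k / real n"
  obtain k' where k': "k = Suc k'" using assms(1) by (cases k) auto
  have t: "0 \<le> t" "t \<le> 1" using assms n_pos unfolding t_def by auto
  have S: "0 \<le> S" "S < 1" using \<beta>_pos \<beta>_less_1 unfolding S_def by auto
  have q: "0 \<le> QS" "QS \<le> S" using QS_nonneg QS_le unfolding S_def by auto
  have Sk: "S ^ k = S * S ^ k'" using k' by simp
  define X where "X = QS * S ^ k'"
  define Y where "Y = QS * real k * S ^ k' * \<beta> + S ^ k"
  have "P k k + P k (Suc k) = t * X + (1 - t) * Y"
    using assms \<beta>_pos \<beta>_less_1 unfolding X_def Y_def t_def S_def k'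
    by (simp add: P_eq P_up binom_bern_diag binom_bern_top binom_bern_beyond algebra_simps)
  moreover have "X \<le> S ^ k" "X \<le> S ^ k'"
    unfolding X_def Sk using q S by (auto intro: mult_right_mono mult_left_le_one_le)
  moreover have "Y \<le> S ^ k * (1 + real k * \<beta>)"
    using mult_right_mono[OF q(2), of "real k * S ^ k' * \<beta>"] S \<beta>_pos
    unfolding Y_def Sk by (simp add: algebra_simps)
  moreover have "Y \<le> real (Suc k) * S ^ k'"
  proof -
    have "QS * \<beta> \<le> 1" using q S \<beta>_pos \<beta>_less_1 by (intro mult_le_one) auto
    then have "(QS * \<beta>) * (real k * S ^ k') \<le> real k * S ^ k'"
      using q S \<beta>_pos by (intro mult_left_le_one_le) auto
    moreover have "S ^ k \<le> S ^ k'" unfolding Sk using S by (intro mult_left_le_one_le) auto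
    ultimately show ?thesis unfolding Y_def by (simp add: algebra_simps)
  qed
  moreover have "S ^ k * (1 + real k * \<beta>) \<le> 1 - \<beta>\<^sup>2"
    unfolding S_def using one_minus_power_times_le \<beta>_pos \<beta>_less_1 assms(1) .
  moreover have "S ^ k \<le> S ^ k * (1 + real k * \<beta>)"
    using S \<beta>_pos by (simp add: mult_le_cancel_left1)
  moreover have "S ^ k' \<le> real (Suc k) * S ^ k'"
    using S by (simp add: mult_le_cancel_right1)
  ultimately show "P k k + P k (Suc k) \<le> 1 - \<beta>\<^sup>2"
    and "P k k + P k (Suc k) \<le> real (Suc k) * (1 - \<beta>) ^ (k - 1)"
    using t unfolding S_def[symmetric] k' diff_Suc_1
    by (auto intro!: convex_bound_le)
qed

definition K_expect :: "(nat \<Rightarrow> real) \<Rightarrow> nat \<Rightarrow> real" where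
  "K_expect f k = (\<Sum>j\<le>Suc k. P k j * f j)"

lemma expectation_K_step: "measure_pmf.expectation (K_step \<alpha> \<beta> n k) f = K_expect f k"
  unfolding K_expect_def using set_pmf_K_step_Suc
  by (subst integral_measure_pmf_real[where A = "{..Suc k}"]) (auto simp: mult.commute)

lemma K_expect_mono:
  assumes "k \<le> n" "\<And>j. j \<le> n \<Longrightarrow> f j \<le> g j"
  shows "K_expect f k \<le> K_expect g k"
  unfolding K_expect_def
proof (intro sum_mono)
  fix j
  show "P k j * f j \<le> P k j * g j"
    using assms P_beyond[of k j] by (cases "j \<le> n") (auto intro: mult_left_mono)
qed

lemma K_expect_add: "K_expect (\<lambda>j. f j + g j) k = K_expect f k + K_expect g k"
  unfolding K_expect_def by (simp add: distrib_left sum.distrib)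

lemma K_expect_diff: "K_expect (\<lambda>j. f j - g j) k = K_expect f k - K_expect g k"
  unfolding K_expect_def by (simp add: right_diff_distrib sum_subtractf)

lemma K_expect_scale: "K_expect (\<lambda>j. c * f j) k = c * K_expect f k"
  unfolding K_expect_def by (simp add: sum_distrib_left algebra_simps)

lemma K_expect_sum: "K_expect (\<lambda>j. \<Sum>s\<in>A. f s j) k = (\<Sum>s\<in>A. K_expect (f s) k)"
  unfolding K_expect_def by (simp add: sum_distrib_left sum.swap[of _ A])

lemma K_expect_const: "K_expect (\<lambda>j. c) k = c"
proof -
  have "(\<Sum>j\<le>Suc k. P k j) = 1"
    using set_pmf_K_step_Suc by (intro sum_pmf_eq_1) auto
  then show ?thesis unfolding K_expect_def by (simp add: sum_distrib_right[symmetric])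
qed

lemma K_expect_ge_term:
  assumes "\<And>j. j \<le> Suc k \<Longrightarrow> 0 \<le> f j" "j \<le> Suc k"
  shows "P k j * f j \<le> K_expect f k"
  unfolding K_expect_def by (rule member_le_sum) (use assms in auto)

lemma K_expect_index_le:
  assumes "k \<le> n"
  shows "K_expect real k \<le> (1 - \<beta>) * real k + QS"
proof -
  define t where "t = real k / real n"
  have t: "0 \<le> t" "t \<le> 1" using assms n_pos unfolding t_def by auto
  have S: "0 \<le> 1 - \<beta>" "1 - \<beta> \<le> 1" using \<beta>_pos \<beta>_less_1 by auto
  have "K_expect real k = t * (\<Sum>j\<le>Suc k. binom_bern (1 - \<beta>) QS (k - 1) j * real j)
      + (1 - t) * (\<Sum>j\<le>Suc k. binom_bern (1 - \<beta>) QS k j * real j)"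
    unfolding K_expect_def P_eq[OF assms] t_def[symmetric]
    by (simp add: distrib_right sum.distrib sum_distrib_left mult.assoc del: sum.atMost_Suc)
  also have "\<dots> = t * (real (k - 1) * (1 - \<beta>) + QS) + (1 - t) * (real k * (1 - \<beta>) + QS)"
    using binom_bern_mean_sum[OF S, of "k - 1" "Suc k" QS] binom_bern_mean_sum[OF S, of k "Suc k" QS]
    by (simp del: sum.atMost_Suc)
  also have "\<dots> \<le> t * (real k * (1 - \<beta>) + QS) + (1 - t) * (real k * (1 - \<beta>) + QS)"
    using t S by (intro add_right_mono mult_left_mono) (auto intro: mult_right_mono)
  finally show ?thesis by (simp add: algebra_simps)
qed

section \<open>The stationary law and \<open>\<mu>\<^sub>n\<close>\<close>

lemma doeblin_K_step: "doeblin_kernel (K_step \<alpha> \<beta> n) n ((1 - QS) * \<beta> ^ n)"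
proof
  fix i
  assume "i \<le> n"
  then show "set_pmf (K_step \<alpha> \<beta> n i) \<subseteq> {..n}" by (rule set_pmf_K_step_le_n)
  have "\<beta> ^ n \<le> \<beta> ^ i" using \<open>i \<le> n\<close> \<beta>_pos \<beta>_less_1 by (intro power_decreasing) auto
  then have "(1 - QS) * \<beta> ^ n \<le> (1 - QS) * \<beta> ^ i" using QS_less_1 by (intro mult_left_mono) auto
  then show "(1 - QS) * \<beta> ^ n \<le> P i 0" using P_zero_ge[OF \<open>i \<le> n\<close>] by linarith
next
  show "0 < (1 - QS) * \<beta> ^ n" using QS_less_1 \<beta>_pos by simp
qed

lemma K_stat_stationary:
  "set_pmf (K_stat \<alpha> \<beta> n) \<subseteq> {..n}" "bind_pmf (K_stat \<alpha> \<beta> n) (K_step \<alpha> \<beta> n) = K_stat \<alpha> \<beta> n"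
  using theI'[OF doeblin_kernel.ex1_stationary[OF doeblin_K_step]] unfolding K_stat_def by auto

abbreviation \<nu> :: "nat \<Rightarrow> real" where
  "\<nu> j \<equiv> pmf (K_stat \<alpha> \<beta> n) j"

definition up :: "nat \<Rightarrow> real" where
  "up i = P i (Suc i)"

definition down :: "nat \<Rightarrow> real" where
  "down k = (\<Sum>j<k. P k j)"

definition climb :: real where
  "climb = (\<Prod>i<n. up i)"

lemma stat_eq: "\<nu> j = (\<Sum>i\<le>n. \<nu> i * P i j)"
  using pmf_bind_atMost[OF K_stat_stationary(1), of "K_step \<alpha> \<beta> n" j]
  unfolding K_stat_stationary(2) .

lemma stat_zero_ge: "(1 - QS) * \<beta> ^ n \<le> \<nu> 0"
proof -
  have "(\<Sum>i\<le>n. \<nu> i * ((1 - QS) * \<beta> ^ n)) \<le> (\<Sum>i\<le>n. \<nu> i * P i 0)"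
    using doeblin_kernel.pmf_K_0_ge[OF doeblin_K_step] by (intro sum_mono mult_left_mono) auto
  moreover have "(\<Sum>i\<le>n. \<nu> i) = 1"
    using K_stat_stationary(1) by (intro sum_pmf_eq_1) auto
  ultimately show ?thesis using stat_eq[of 0] by (simp add: sum_distrib_right[symmetric])
qed

lemma stat_up_le: "j \<le> n \<Longrightarrow> \<nu> j * up j \<le> \<nu> (Suc j)"
  unfolding up_def stat_eq[of "Suc j"] by (rule member_le_sum) auto

lemma up_eq: "i \<le> n \<Longrightarrow> up i = (1 - real i / real n) * QS * (1 - \<beta>) ^ i"
  unfolding up_def by (rule P_up)

lemma up_nonneg: "0 \<le> up i"
  unfolding up_def by simp

lemma up_pos: "i < n \<Longrightarrow> 0 < up i"
  using up_eq[of i] QS_nonneg QS_le \<alpha>_less_1 \<beta>_less_1 n_pos by (simp add: QS_def)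

lemma stat_pos: "j < n \<Longrightarrow> 0 < \<nu> j"
proof (induction j)
  case 0
  then show ?case using stat_zero_ge QS_less_1 \<beta>_pos by (smt (verit) mult_pos_pos zero_less_power)
next
  case (Suc j)
  then have "0 < \<nu> j * up j" using up_pos by simp
  then show ?case using stat_up_le[of j] Suc.prems by linarith
qed

lemma stat_down_le:
  assumes "j < n"
  shows "\<nu> (Suc j) * down (Suc j) \<le> \<nu> j * up j"
  unfolding down_def up_def lessThan_Suc_atMost
  using stationary_cut_flow[OF set_pmf_K_step_Suc K_stat_stationary assms] .

lemma down_eq: "down k = 1 - P k k - P k (Suc k)"
proof -
  have "(\<Sum>j\<le>Suc k. P k j) = 1"
    using set_pmf_K_step_Suc by (intro sum_pmf_eq_1) auto
  then show ?thesis unfolding down_def by (simp add: lessThan_Suc_atMost[symmetric])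
qed

lemma down_ge_exp:
  assumes "1 \<le> k" "k \<le> n"
  shows "exp (- (real (Suc k) * (1 - \<beta>) ^ (k - 1)) / \<beta>\<^sup>2) \<le> down k"
proof -
  have d: "\<beta>\<^sup>2 \<le> down k" "1 - down k \<le> real (Suc k) * (1 - \<beta>) ^ (k - 1)"
    using P_stay_or_up_le[OF assms] down_eq by auto
  then have "0 < down k" using \<beta>_pos by (smt (verit) zero_less_power)
  have "down k \<le> 1"
    unfolding down_eq using pmf_nonneg[of "K_step \<alpha> \<beta> n k" k] pmf_nonneg[of "K_step \<alpha> \<beta> n k" "Suc k"]
    by linarith
  have "- ln (down k) \<le> 1 / down k - 1"
    using ln_le_minus_one[of "1 / down k"] \<open>0 < down k\<close> by (simp add: ln_div)
  also have "\<dots> = (1 - down k) / down k" using \<open>0 < down k\<close> by (simp add: field_simps)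
  also have "\<dots> \<le> (1 - down k) / \<beta>\<^sup>2"
    using d \<beta>_pos \<open>down k \<le> 1\<close> \<open>0 < down k\<close> by (intro divide_left_mono) auto
  also have "\<dots> \<le> real (Suc k) * (1 - \<beta>) ^ (k - 1) / \<beta>\<^sup>2"
    using d by (intro divide_right_mono) auto
  finally have "- (real (Suc k) * (1 - \<beta>) ^ (k - 1)) / \<beta>\<^sup>2 \<le> ln (down k)" by simp
  then show ?thesis using \<open>0 < down k\<close> by (metis exp_le_cancel_iff exp_ln)
qed

lemma prod_down_ge: "exp (- down_exponent) \<le> (\<Prod>i<n - 1. down (Suc i))"
proof -
  have "summable (\<lambda>i. (real i + 2) * (1 - \<beta>) ^ i)"
    using \<beta>_pos \<beta>_less_1 by (intro summable_affine_times_geometric) auto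
  then have "(\<Sum>i<n - 1. (real i + 2) * (1 - \<beta>) ^ i) \<le> (\<Sum>i. (real i + 2) * (1 - \<beta>) ^ i)"
    using \<beta>_less_1 by (intro sum_le_suminf) auto
  then have "exp (- down_exponent) \<le> exp (\<Sum>i<n - 1. - ((real i + 2) * (1 - \<beta>) ^ i) / \<beta>\<^sup>2)"
    unfolding down_exponent_def using \<beta>_pos
    by (simp add: sum_negf sum_divide_distrib[symmetric] divide_right_mono)
  also have "\<dots> = (\<Prod>i<n - 1. exp (- (real (Suc (Suc i)) * (1 - \<beta>) ^ i) / \<beta>\<^sup>2))"
    by (simp add: exp_sum add.commute)
  also have "\<dots> \<le> (\<Prod>i<n - 1. down (Suc i))"
    using down_ge_exp[of "Suc _"] by (intro prod_mono) auto
  finally show ?thesis .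
qed

lemma down_nonneg: "0 \<le> down k"
  unfolding down_def by (simp add: sum_nonneg)

lemma stat_times_prod_down_le: "j < n \<Longrightarrow> \<nu> j * (\<Prod>i<j. down (Suc i)) \<le> (\<Prod>i<j. up i)"
proof (induction j)
  case 0
  show ?case using pmf_le_1[of "K_stat \<alpha> \<beta> n" 0] by simp
next
  case (Suc j)
  have "\<nu> (Suc j) * (\<Prod>i<Suc j. down (Suc i)) = (\<nu> (Suc j) * down (Suc j)) * (\<Prod>i<j. down (Suc i))"
    by simp
  also have "\<dots> \<le> (\<nu> j * up j) * (\<Prod>i<j. down (Suc i))"
    using stat_down_le[of j] Suc.prems down_nonneg by (intro mult_right_mono prod_nonneg) auto
  also have "\<dots> = up j * (\<nu> j * (\<Prod>i<j. down (Suc i)))"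
    by simp
  also have "\<dots> \<le> up j * (\<Prod>i<j. up i)"
    using Suc up_nonneg[of j] by (intro mult_left_mono) auto
  finally show ?case by (simp add: mult.commute)
qed

lemma cc_mu_eq: "cc_mu \<alpha> \<beta> n = \<nu> (n - 1) * up (n - 1)"
proof -
  have "P k n = 0" if "k < n - 1" for k
    using set_pmf_K_step_Suc[of k] that by (auto simp: set_pmf_eq)
  then have "(\<Sum>k<n - 1. \<nu> k * P k n) = 0" by simp
  moreover have "{..<n} = insert (n - 1) {..<n - 1}" using n_pos by auto
  ultimately show ?thesis unfolding cc_mu_def up_def using n_pos by simp
qed

lemma cc_mu_pos: "0 < cc_mu \<alpha> \<beta> n"
  unfolding cc_mu_eq using stat_pos[of "n - 1"] up_pos[of "n - 1"] n_pos by simp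

lemma cc_mu_le: "cc_mu \<alpha> \<beta> n \<le> climb * exp down_exponent"
proof -
  define D where "D = (\<Prod>i<n - 1. down (Suc i))"
  have exp_le_D: "exp (- down_exponent) \<le> D" unfolding D_def by (rule prod_down_ge)
  then have D_pos: "0 < D" using exp_gt_zero[of "- down_exponent"] by linarith
  have "1 / D \<le> 1 / exp (- down_exponent)"
    using D_pos exp_le_D by (intro divide_left_mono) auto
  then have D: "0 < D" "1 / D \<le> exp down_exponent" using D_pos by (simp_all add: exp_minus divide_inverse)
  have "\<nu> (n - 1) * D \<le> (\<Prod>i<n - 1. up i)"
    unfolding D_def using stat_times_prod_down_le[of "n - 1"] n_pos by simp
  then have "\<nu> (n - 1) \<le> (\<Prod>i<n - 1. up i) * (1 / D)" using D by (simp add: field_simps)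
  also have "\<dots> \<le> (\<Prod>i<n - 1. up i) * exp down_exponent"
    using D up_nonneg by (intro mult_left_mono prod_nonneg) auto
  finally have "\<nu> (n - 1) * up (n - 1) \<le> (\<Prod>i<n - 1. up i) * exp down_exponent * up (n - 1)"
    using up_nonneg[of "n - 1"] by (rule mult_right_mono)
  also have "\<dots> = (\<Prod>i<n - 1. up i) * up (n - 1) * exp down_exponent"
    by simp
  also have "(\<Prod>i<n - 1. up i) * up (n - 1) = climb"
    unfolding climb_def using n_pos by (metis Suc_diff_1 prod.lessThan_Suc)
  finally show ?thesis unfolding cc_mu_eq .
qed

section \<open>The killed chain\<close>

primrec K_surv :: "nat \<Rightarrow> nat \<Rightarrow> real" where
  "K_surv 0 k = (if k = n then 0 else 1)"
| "K_surv (Suc m) k = (if k = n then 0 else K_expect (K_surv m) k)"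

lemma set_pmf_cc_step:
  assumes "A \<subseteq> {..<n}"
  shows "set_pmf (cc_step \<alpha> \<beta> n A) \<subseteq> Pow {..<n}"
proof -
  have "set_pmf (pmf_of_set {..<n}) = {..<n}" using n_pos by (simp add: set_pmf_of_set lessThan_empty_iff)
  then show ?thesis using assms unfolding cc_step_def thin_def by (auto split: if_splits)
qed

lemma cc_surv_eq_K_surv: "A \<subseteq> {..<n} \<Longrightarrow> cc_surv m \<alpha> \<beta> n A = K_surv m (card A)"
proof (induction m arbitrary: A)
  case 0
  have "A = {..<n} \<longleftrightarrow> card A = n" using 0 card_subset_eq[of "{..<n}" A] by auto
  then show ?case by simp
next
  case (Suc m)
  have full: "A = {..<n} \<longleftrightarrow> card A = n" using Suc.prems card_subset_eq[of "{..<n}" A] by auto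
  have "AE B in measure_pmf (cc_step \<alpha> \<beta> n A). cc_surv m \<alpha> \<beta> n B = K_surv m (card B)"
    unfolding AE_measure_pmf_iff using set_pmf_cc_step[OF Suc.prems] Suc.IH by blast
  then have "measure_pmf.expectation (cc_step \<alpha> \<beta> n A) (\<lambda>B. cc_surv m \<alpha> \<beta> n B)
      = measure_pmf.expectation (map_pmf card (cc_step \<alpha> \<beta> n A)) (K_surv m)"
    by (simp cong: integral_cong_AE)
  also have "\<dots> = K_expect (K_surv m) (card A)"
    using map_card_cc_step[OF _ _ _ _ n_pos Suc.prems] \<alpha>_nonneg \<alpha>_less_1 \<beta>_pos \<beta>_less_1
    by (simp add: expectation_K_step)
  finally show ?case using full by simp
qed

lemma K_surv_bounds: "k \<le> n \<Longrightarrow> 0 \<le> K_surv m k \<and> K_surv m k \<le> 1"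
proof (induction m arbitrary: k)
  case (Suc m)
  have "K_expect (\<lambda>j. 0) k \<le> K_expect (K_surv m) k" "K_expect (K_surv m) k \<le> K_expect (\<lambda>j. 1) k"
    using Suc by (auto intro!: K_expect_mono)
  then show ?case by (simp add: K_expect_const)
qed simp

lemma K_surv_Suc_le: "k \<le> n \<Longrightarrow> K_surv (Suc m) k \<le> K_surv m k"
proof (induction m arbitrary: k)
  case 0
  have "K_expect (K_surv 0) k \<le> K_expect (\<lambda>j. 1) k" using 0 by (intro K_expect_mono) auto
  then show ?case by (simp add: K_expect_const)
next
  case (Suc m)
  have "K_expect (K_surv (Suc m)) k \<le> K_expect (K_surv m) k" using Suc by (intro K_expect_mono) auto
  then show ?case by simp
qed

lemma K_surv_antimono: "m \<le> m' \<Longrightarrow> k \<le> n \<Longrightarrow> K_surv m' k \<le> K_surv m k"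
proof (induction m' rule: dec_induct)
  case (step m')
  then show ?case using K_surv_Suc_le[of k m'] by linarith
qed simp

text \<open>Markov property at time \<open>m\<close>.\<close>
lemma K_surv_add_le:
  assumes "\<And>j. j \<le> n \<Longrightarrow> K_surv b j \<le> M"
  shows "k \<le> n \<Longrightarrow> K_surv (m + b) k \<le> K_surv m k * M"
proof (induction m arbitrary: k)
  case 0
  have "K_surv b n = 0" by (cases b) auto
  then show ?case using assms[OF 0] by (cases "k = n") auto
next
  case (Suc m)
  have "K_expect (K_surv (m + b)) k \<le> K_expect (\<lambda>j. M * K_surv m j) k"
    using Suc by (intro K_expect_mono) (auto simp: mult.commute)
  then show ?case by (simp add: K_expect_scale mult.commute)
qed

lemma K_surv_mult_le:
  assumes "0 \<le> p" "\<And>k. k \<le> n \<Longrightarrow> K_surv L k \<le> 1 - p"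
  shows "k \<le> n \<Longrightarrow> K_surv (j * L) k \<le> (1 - p) ^ j"
proof (induction j arbitrary: k)
  case 0
  then show ?case using K_surv_bounds by simp
next
  case (Suc j)
  have "K_surv (L + j * L) k \<le> K_surv L k * (1 - p) ^ j"
    by (rule K_surv_add_le[OF Suc.IH Suc.prems])
  also have "\<dots> \<le> (1 - p) * (1 - p) ^ j"
  proof (rule mult_right_mono)
    have "p \<le> 1" using assms(2)[of 0] K_surv_bounds[of 0 L] by simp
    then show "0 \<le> (1 - p) ^ j" by simp
  qed (use assms Suc.prems in auto)
  finally show ?case by (simp add: add.commute)
qed

lemma K_surv_exp_bound:
  assumes "0 < L" "0 \<le> p" "p \<le> 1" "\<And>k. k \<le> n \<Longrightarrow> K_surv L k \<le> 1 - p" "k \<le> n"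
  shows "K_surv m k \<le> exp 1 * exp (- p * real m / real L)"
proof -
  define j where "j = m div L"
  have "real m < (real j + 1) * real L"
  proof -
    have "m < j * L + L"
      unfolding j_def using div_mult_mod_eq[of m L] mod_less_divisor[OF assms(1), of m] by linarith
    then show ?thesis by (simp add: algebra_simps flip: of_nat_mult of_nat_add)
  qed
  then have "p * real m \<le> p * ((real j + 1) * real L)"
    using assms(2) by (intro mult_left_mono) auto
  then have "p * real m / real L - p \<le> p * real j"
    using assms(1) by (simp add: field_simps)
  have "K_surv m k \<le> K_surv (j * L) k"
    unfolding j_def using assms(5) by (intro K_surv_antimono) auto
  also have "\<dots> \<le> (1 - p) ^ j" using K_surv_mult_le assms by blast
  also have "\<dots> \<le> exp (- p) ^ j"
    using assms exp_ge_add_one_self[of "- p"] by (intro power_mono) auto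
  also have "\<dots> = exp (- (p * real j))" by (simp add: exp_of_nat_mult[symmetric] mult.commute)
  also have "\<dots> \<le> exp (1 - p * real m / real L)"
    using \<open>p * real m / real L - p \<le> p * real j\<close> assms(3) by simp
  finally show ?thesis by (simp add: exp_diff exp_minus field_simps)
qed

lemma subsolution_le_hit_prob:
  assumes "\<And>k. k \<le> n \<Longrightarrow> h 0 k \<le> (if k = n then 1 else 0)"
    and "\<And>m. h m n \<le> 1"
    and "\<And>m k. k < n \<Longrightarrow> h (Suc m) k \<le> K_expect (h m) k"
  shows "k \<le> n \<Longrightarrow> h m k \<le> 1 - K_surv m k"
proof (induction m arbitrary: k)
  case 0
  then show ?case using assms(1)[of k] by (cases "k = n") auto
next
  case (Suc m)
  show ?case
  proof (cases "k = n")
    case True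
    then show ?thesis using assms(2) by simp
  next
    case False
    then have "k < n" using Suc.prems by simp
    have "h (Suc m) k \<le> K_expect (h m) k" using assms(3)[OF \<open>k < n\<close>] .
    also have "\<dots> \<le> K_expect (\<lambda>j. 1 - K_surv m j) k" using Suc by (intro K_expect_mono) auto
    also have "\<dots> = 1 - K_surv (Suc m) k" using False by (simp add: K_expect_diff K_expect_const)
    finally show ?thesis .
  qed
qed

section \<open>Completion within \<open>3 n\<close> rounds\<close>

primrec at_zero :: "nat \<Rightarrow> nat \<Rightarrow> real" where
  "at_zero 0 k = (if k = 0 then 1 else 0)"
| "at_zero (Suc s) k = K_expect (at_zero s) k"

primrec at_zero_killed :: "nat \<Rightarrow> nat \<Rightarrow> real" where
  "at_zero_killed 0 k = (if k = 0 then 1 else 0)"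
| "at_zero_killed (Suc s) k = (if k = n then 0 else K_expect (at_zero_killed s) k)"

lemma at_zero_bounds: "k \<le> n \<Longrightarrow> 0 \<le> at_zero s k \<and> at_zero s k \<le> 1"
proof (induction s arbitrary: k)
  case (Suc s)
  have "K_expect (\<lambda>j. 0) k \<le> K_expect (at_zero s) k" "K_expect (at_zero s) k \<le> K_expect (\<lambda>j. 1) k"
    using Suc by (auto intro!: K_expect_mono)
  then show ?case by (simp add: K_expect_const)
qed simp

lemma at_zero_diff_le: "k \<le> n \<Longrightarrow> at_zero s k - at_zero_killed s k \<le> 1 - K_surv s k"
proof (induction s arbitrary: k)
  case (Suc s)
  show ?case
  proof (cases "k = n")
    case True
    then show ?thesis using at_zero_bounds[of k "Suc s"] by simp
  next
    case False
    have "K_expect (\<lambda>j. at_zero s j - at_zero_killed s j) k \<le> K_expect (\<lambda>j. 1 - K_surv s j) k"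
      using Suc by (intro K_expect_mono) auto
    then show ?thesis using False by (simp add: K_expect_diff K_expect_const)
  qed
qed simp

lemma at_zero_one: "at_zero (Suc 0) k = P k 0"
proof -
  have "at_zero (Suc 0) k = (\<Sum>j\<le>Suc k. if j = 0 then P k 0 else 0)"
    unfolding at_zero.simps K_expect_def by (intro sum.cong) auto
  also have "\<dots> = P k 0" by (simp del: sum.atMost_Suc)
  finally show ?thesis .
qed

text \<open>Affineness in \<open>k\<close> is what lets the drift bound on the mean be turned into a lower
  bound on \<open>at_zero\<close>.\<close>
lemma P_zero_ge_affine:
  assumes "k \<le> n"
  shows "zero_floor - zero_floor / real zero_level * real k \<le> P k 0"
proof (cases "k \<le> zero_level")
  case True
  have "\<beta> ^ zero_level \<le> \<beta> ^ k" using True \<beta>_pos \<beta>_less_1 by (intro power_decreasing) auto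
  then have "zero_floor \<le> (1 - QS) * \<beta> ^ k"
    unfolding zero_floor_def using QS_less_1 by (intro mult_left_mono) auto
  moreover have "0 \<le> zero_floor / real zero_level * real k" using zero_floor_pos by simp
  ultimately show ?thesis using P_zero_ge[OF assms] by linarith
next
  case False
  then have "zero_floor \<le> zero_floor / real zero_level * real k"
    using zero_floor_pos zero_level_pos by (simp add: field_simps)
  then show ?thesis using pmf_nonneg[of _ 0] by (smt (verit))
qed

definition mean_bound :: "nat \<Rightarrow> nat \<Rightarrow> real" where
  "mean_bound t j = (1 - \<beta>) ^ t * real j + QS * (\<Sum>i<t. (1 - \<beta>) ^ i)"

lemma K_expect_mean_bound: "k \<le> n \<Longrightarrow> K_expect (mean_bound t) k \<le> mean_bound (Suc t) k"
proof -
  assume "k \<le> n"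
  have "K_expect (mean_bound t) k = (1 - \<beta>) ^ t * K_expect real k + QS * (\<Sum>i<t. (1 - \<beta>) ^ i)"
    unfolding mean_bound_def K_expect_add K_expect_scale K_expect_const ..
  also have "\<dots> \<le> (1 - \<beta>) ^ t * ((1 - \<beta>) * real k + QS) + QS * (\<Sum>i<t. (1 - \<beta>) ^ i)"
    using K_expect_index_le[OF \<open>k \<le> n\<close>] \<beta>_less_1 by (intro add_right_mono mult_left_mono) auto
  also have "\<dots> = mean_bound (Suc t) k"
    unfolding mean_bound_def by (simp add: algebra_simps)
  finally show ?thesis .
qed

lemma at_zero_ge_mean_bound:
  "k \<le> n \<Longrightarrow> zero_floor - zero_floor / real zero_level * mean_bound t k \<le> at_zero (Suc t) k"
proof (induction t arbitrary: k)
  case 0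
  then show ?case using P_zero_ge_affine[OF 0] at_zero_one by (simp add: mean_bound_def)
next
  case (Suc t)
  have c: "0 \<le> zero_floor / real zero_level" using zero_floor_pos by simp
  have "zero_floor - zero_floor / real zero_level * mean_bound (Suc t) k
      \<le> zero_floor - zero_floor / real zero_level * K_expect (mean_bound t) k"
    using mult_left_mono[OF K_expect_mean_bound[OF Suc.prems, of t] c] by linarith
  also have "\<dots> = K_expect (\<lambda>j. zero_floor - zero_floor / real zero_level * mean_bound t j) k"
    unfolding K_expect_diff K_expect_scale K_expect_const ..
  also have "\<dots> \<le> K_expect (at_zero (Suc t)) k"
    using Suc.IH by (intro K_expect_mono[OF Suc.prems]) auto
  finally show ?case by simp
qed

lemma at_zero_ge_half:
  assumes "n \<le> t" "real n * (1 - \<beta>) ^ n \<le> 1" "k \<le> n"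
  shows "zero_floor / 2 \<le> at_zero (Suc t) k"
proof -
  have "(1 - \<beta>) ^ t * real k \<le> (1 - \<beta>) ^ n * real n"
    using assms \<beta>_pos \<beta>_less_1 by (intro mult_mono power_decreasing) auto
  moreover have "(\<Sum>i<t. (1 - \<beta>) ^ i) \<le> 1 / \<beta>"
    using sum_gp_strict[of "1 - \<beta>" t] \<beta>_pos \<beta>_less_1 by (simp add: divide_right_mono)
  then have "QS * (\<Sum>i<t. (1 - \<beta>) ^ i) \<le> 1 * (1 / \<beta>)"
    using QS_nonneg QS_less_1 \<beta>_less_1 by (intro mult_mono) (auto intro!: sum_nonneg)
  ultimately have "mean_bound t k \<le> 1 + 1 / \<beta>"
    unfolding mean_bound_def using assms(2) by (simp add: mult.commute)
  then have "zero_floor / real zero_level * mean_bound t k \<le> zero_floor / real zero_level * (1 + 1 / \<beta>)"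
    using zero_floor_pos by (intro mult_left_mono) auto
  also have "\<dots> \<le> zero_floor / 2"
  proof -
    have "(1 + 1 / \<beta>) / real zero_level \<le> 1 / 2"
      using zero_level_ge zero_level_pos by (simp add: field_simps)
    then have "zero_floor * ((1 + 1 / \<beta>) / real zero_level) \<le> zero_floor * (1 / 2)"
      using zero_floor_pos by (intro mult_left_mono) auto
    then show ?thesis by (simp add: field_simps)
  qed
  finally show ?thesis using at_zero_ge_mean_bound[OF assms(3), of t] by linarith
qed

lemma climb_nonneg: "0 \<le> climb"
  unfolding climb_def using up_nonneg by (intro prod_nonneg) auto

lemma n_times_climb_le_1: "real n * climb \<le> 1"
proof -
  have "climb = up (n - 1) * (\<Prod>i<n - 1. up i)"
    unfolding climb_def using n_pos by (metis Suc_diff_1 prod.lessThan_Suc mult.commute)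
  also have "\<dots> \<le> up (n - 1) * 1"
    using up_nonneg by (intro mult_left_mono prod_le_1) (auto simp: up_def pmf_le_1)
  also have "\<dots> = 1 / real n * (QS * (1 - \<beta>) ^ (n - 1))"
    using n_pos by (simp add: up_eq field_simps of_nat_diff)
  also have "\<dots> \<le> 1 / real n * 1"
    using QS_nonneg QS_less_1 \<beta>_pos \<beta>_less_1 by (intro mult_left_mono mult_le_one power_le_one) auto
  finally show ?thesis using n_pos by (simp add: field_simps)
qed

text \<open>A lower bound for the probability of completing within \<open>r\<close> rounds by climbing
  straight up from level \<open>k \<ge> 1\<close>; level \<open>0\<close> is excluded because it is accounted for
  in \<open>return_climb\<close>.\<close>
definition climb_from :: "nat \<Rightarrow> nat \<Rightarrow> real" where
  "climb_from r k = (if 1 \<le> k \<and> n \<le> r + k then \<Prod>i\<in>{k..<n}. up i else 0)"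

definition window :: "nat \<Rightarrow> nat \<Rightarrow> real" where
  "window r s = (if n \<le> r - s \<and> r - s < 2 * n then 1 else 0)"

text \<open>The events ``at \<open>0\<close> at time \<open>s\<close> without having completed, then straight up to \<open>n\<close>''
  are disjoint for different \<open>s\<close> in the window (which leaves at least \<open>n\<close> rounds for the climb),
  so their probabilities add up.\<close>
definition return_climb :: "nat \<Rightarrow> nat \<Rightarrow> real" where
  "return_climb r k = climb * (\<Sum>s<r. window r s * at_zero_killed s k)"

lemma climb_from_nonneg: "0 \<le> climb_from r k"
  unfolding climb_from_def using up_nonneg by (auto intro: prod_nonneg)

lemma climb_from_Suc: "1 \<le> k \<Longrightarrow> k < n \<Longrightarrow> climb_from (Suc r) k = up k * climb_from r (Suc k)"
  unfolding climb_from_def by (simp add: prod.atLeast_Suc_lessThan)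

lemma climb_window_le: "climb * window (Suc r) 0 \<le> up 0 * climb_from r 1"
proof (cases "n \<le> Suc r")
  case True
  have "up 0 * climb_from r 1 = (\<Prod>i\<in>{0..<n}. up i)"
    unfolding climb_from_def using True n_pos by (simp add: prod.atLeast_Suc_lessThan)
  then show ?thesis
    unfolding window_def using climb_nonneg by (simp add: climb_def atLeast0LessThan)
next
  case False
  then show ?thesis unfolding window_def using up_nonneg climb_from_nonneg by simp
qed

lemma return_climb_Suc:
  assumes "k < n"
  shows "return_climb (Suc r) k = climb * window (Suc r) 0 * (if k = 0 then 1 else 0)
    + K_expect (return_climb r) k"
proof -
  have "(\<Sum>s<Suc r. window (Suc r) s * at_zero_killed s k)
      = window (Suc r) 0 * at_zero_killed 0 k + (\<Sum>s<r. window r s * at_zero_killed (Suc s) k)"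
    by (subst sum.lessThan_Suc_shift) (simp add: window_def)
  also have "(\<Sum>s<r. window r s * at_zero_killed (Suc s) k)
      = K_expect (\<lambda>j. \<Sum>s<r. window r s * at_zero_killed s j) k"
    using assms by (simp add: K_expect_sum K_expect_scale)
  finally show ?thesis
    unfolding return_climb_def by (simp add: K_expect_scale algebra_simps)
qed

lemma return_climb_le_hit_prob:
  assumes "k \<le> n"
  shows "return_climb m k \<le> 1 - K_surv m k"
proof -
  define h where "h r j = return_climb r j + climb_from r j" for r j
  have "h m k \<le> 1 - K_surv m k"
  proof (rule subsolution_le_hit_prob[OF _ _ _ assms])
    show "h 0 k \<le> (if k = n then 1 else 0)" if "k \<le> n" for k
      unfolding h_def return_climb_def climb_from_def using that n_pos by auto
  next
    have "at_zero_killed s n = 0" for s using n_pos by (cases s) auto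
    then show "h m n \<le> 1" for m
      unfolding h_def return_climb_def climb_from_def using n_pos by simp
  next
    fix m k
    assume "k < n"
    have "climb * window (Suc m) 0 * (if k = 0 then 1 else 0) + climb_from (Suc m) k
        \<le> up k * climb_from m (Suc k)"
      using climb_window_le[of m] climb_from_Suc[of k m] \<open>k < n\<close>
      by (cases "k = 0") (auto simp: climb_from_def)
    also have "\<dots> \<le> K_expect (climb_from m) k"
      unfolding up_def by (rule K_expect_ge_term) (auto simp: climb_from_nonneg)
    finally show "h (Suc m) k \<le> K_expect (h m) k"
      unfolding h_def return_climb_Suc[OF \<open>k < n\<close>] K_expect_add by simp
  qed
  then show ?thesis unfolding h_def using climb_from_nonneg[of m k] by simp
qed

lemma at_zero_killed_ge:
  assumes "real n * (1 - \<beta>) ^ n \<le> 1" "k \<le> n" "n < s" "s \<le> 3 * n"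
  shows "zero_floor / 2 - (1 - K_surv (3 * n) k) \<le> at_zero_killed s k"
proof -
  obtain t where s: "s = Suc t" "n \<le> t" using assms(3) by (cases s) auto
  have "zero_floor / 2 \<le> at_zero s k" unfolding s(1) by (rule at_zero_ge_half[OF s(2) assms(1,2)])
  moreover have "at_zero s k - at_zero_killed s k \<le> 1 - K_surv s k"
    by (rule at_zero_diff_le[OF assms(2)])
  moreover have "K_surv (3 * n) k \<le> K_surv s k"
    using assms by (intro K_surv_antimono) auto
  ultimately show ?thesis by linarith
qed

lemma sum_window: "(\<Sum>s<3 * n. window (3 * n) s) = real n"
proof -
  have "{s \<in> {..<3 * n}. n \<le> 3 * n - s \<and> 3 * n - s < 2 * n} = {Suc n..2 * n}" by auto
  then show ?thesis unfolding window_def by (simp add: sum.If_cases Int_def)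
qed

lemma hit_prob_ge:
  assumes "real n * (1 - \<beta>) ^ n \<le> 1" "k \<le> n"
  shows "real n * climb * zero_floor / 4 \<le> 1 - K_surv (3 * n) k"
proof -
  define H where "H = 1 - K_surv (3 * n) k"
  have H_nonneg: "0 \<le> H" unfolding H_def using K_surv_bounds[OF assms(2)] by simp
  have term_ge: "window (3 * n) s * (zero_floor / 2 - H) \<le> window (3 * n) s * at_zero_killed s k"
    for s
  proof (cases "n \<le> 3 * n - s \<and> 3 * n - s < 2 * n")
    case True
    then have "window (3 * n) s = 1" unfolding window_def by simp
    moreover have "zero_floor / 2 - H \<le> at_zero_killed s k"
      unfolding H_def using True by (intro at_zero_killed_ge[OF assms]) auto
    ultimately show ?thesis by simp
  next
    case False
    then have "window (3 * n) s = 0" unfolding window_def by auto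
    then show ?thesis by simp
  qed
  have "climb * (real n * (zero_floor / 2 - H))
      = climb * (\<Sum>s<3 * n. window (3 * n) s * (zero_floor / 2 - H))"
    unfolding sum_distrib_right[symmetric] sum_window ..
  also have "\<dots> \<le> return_climb (3 * n) k"
    unfolding return_climb_def by (rule mult_left_mono[OF sum_mono]) (use term_ge climb_nonneg in auto)
  also have "\<dots> \<le> H"
    unfolding H_def by (rule return_climb_le_hit_prob[OF assms(2)])
  finally have "real n * climb * (zero_floor / 2) \<le> H * (1 + real n * climb)"
    by (simp add: algebra_simps)
  also have "\<dots> \<le> H * 2"
    using n_times_climb_le_1 H_nonneg by (intro mult_left_mono) auto
  finally show ?thesis unfolding H_def by simp
qed

section \<open>Exponential tail\<close>

lemma tail_rate_times_cc_mu_le: "tail_rate * cc_mu \<alpha> \<beta> n \<le> climb * zero_floor / 12"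
proof -
  have "tail_rate * cc_mu \<alpha> \<beta> n \<le> tail_rate * (climb * exp down_exponent)"
    using cc_mu_le tail_rate_pos by (intro mult_left_mono) auto
  then show ?thesis unfolding tail_rate_def by (simp add: mult.commute)
qed

lemma K_surv_tail:
  assumes "real n * (1 - \<beta>) ^ n \<le> 1" "k \<le> n"
  shows "K_surv m k \<le> exp 1 * exp (- tail_rate * cc_mu \<alpha> \<beta> n * real m)"
proof -
  define p where "p = real n * climb * zero_floor / 4"
  have "p \<le> 1 * 1 / 4"
    unfolding p_def using n_times_climb_le_1 zero_floor_le_1 zero_floor_pos
    by (intro divide_right_mono mult_mono) auto
  moreover have "0 \<le> p" unfolding p_def using climb_nonneg zero_floor_pos by simp
  moreover have "K_surv (3 * n) k' \<le> 1 - p" if "k' \<le> n" for k'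
    using hit_prob_ge[OF assms(1) that] unfolding p_def by linarith
  ultimately have "K_surv m k \<le> exp 1 * exp (- p * real m / real (3 * n))"
    using assms(2) n_pos by (intro K_surv_exp_bound) auto
  also have "exp (- p * real m / real (3 * n)) \<le> exp (- tail_rate * cc_mu \<alpha> \<beta> n * real m)"
  proof -
    have "p * real m / real (3 * n) = climb * zero_floor / 12 * real m"
      unfolding p_def using n_pos by (simp add: field_simps)
    then show ?thesis using mult_right_mono[OF tail_rate_times_cc_mu_le, of "real m"] by simp
  qed
  finally show ?thesis by simp
qed

lemma cc_tail_le:
  assumes "real n * (1 - \<beta>) ^ n \<le> 1" "A \<subseteq> {..<n}" "0 \<le> x"
  shows "cc_tail \<alpha> \<beta> n A (x / cc_mu \<alpha> \<beta> n) \<le> exp 2 * exp (- tail_rate * x)"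
proof -
  define \<mu> where "\<mu> = cc_mu \<alpha> \<beta> n"
  define m where "m = nat \<lfloor>x / \<mu>\<rfloor>"
  have "0 < \<mu>" unfolding \<mu>_def by (rule cc_mu_pos)
  moreover have "0 \<le> x / \<mu>" using \<open>0 < \<mu>\<close> assms(3) by simp
  then have "x / \<mu> - 1 \<le> real m" unfolding m_def by linarith
  ultimately have "x - \<mu> \<le> \<mu> * real m" by (simp add: field_simps)
  have "card A \<le> n" using card_mono[OF _ assms(2)] by simp
  have "cc_tail \<alpha> \<beta> n A (x / \<mu>) = K_surv m (card A)"
    unfolding cc_tail_def m_def using cc_surv_eq_K_surv[OF assms(2)] by simp
  also have "\<dots> \<le> exp 1 * exp (- tail_rate * \<mu> * real m)"
    unfolding \<mu>_def by (rule K_surv_tail[OF assms(1) \<open>card A \<le> n\<close>])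
  also have "\<dots> \<le> exp 1 * exp (1 - tail_rate * x)"
  proof -
    have "climb \<le> real n * climb"
      using mult_right_mono[of 1 "real n" climb] climb_nonneg n_pos by simp
    then have "climb * zero_floor \<le> 1"
      using n_times_climb_le_1 climb_nonneg zero_floor_pos zero_floor_le_1 by (intro mult_le_one) auto
    then have "tail_rate * \<mu> \<le> 1"
      using tail_rate_times_cc_mu_le unfolding \<mu>_def by linarith
    moreover have "tail_rate * (x - \<mu>) \<le> tail_rate * (\<mu> * real m)"
      using \<open>x - \<mu> \<le> \<mu> * real m\<close> tail_rate_pos by (intro mult_left_mono) auto
    ultimately show ?thesis by (simp add: algebra_simps)
  qed
  finally show ?thesis unfolding \<mu>_def by (simp add: exp_add[symmetric] exp_diff)
qed

end

theorem mainTheorem17: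
  fixes \<alpha> \<beta> :: real
  assumes "0 \<le> \<alpha>" "\<alpha> < 1" "0 < \<beta>" "\<beta> < 1"
  shows "\<exists>C c. 0 < C \<and> 0 < c \<and> (\<exists>N. \<forall>n\<ge>N. \<forall>A. A \<subseteq> {..<n} \<longrightarrow>
           (\<forall>x::real. x \<ge> 0 \<longrightarrow> cc_tail \<alpha> \<beta> n A (x / cc_mu \<alpha> \<beta> n) \<le> C * exp (- c * x)))"
proof -
  interpret cc_params \<alpha> \<beta> using assms by unfold_locales
  have "(\<lambda>n. real n * (1 - \<beta>) ^ n) \<longlonglongrightarrow> 0"
    using assms by (intro powser_times_n_limit_0) auto
  then have "eventually (\<lambda>n. real n * (1 - \<beta>) ^ n < 1) sequentially"
    by (rule order_tendstoD(2)) simp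
  then obtain N where N: "\<And>n. n \<ge> N \<Longrightarrow> real n * (1 - \<beta>) ^ n \<le> 1"
    unfolding eventually_sequentially by (meson less_imp_le)
  have tail: "cc_tail \<alpha> \<beta> n A (x / cc_mu \<alpha> \<beta> n) \<le> exp 2 * exp (- tail_rate * x)"
    if "n \<ge> max 1 N" "A \<subseteq> {..<n}" "0 \<le> x" for n A x
  proof -
    interpret cc_chain \<alpha> \<beta> n using that by unfold_locales auto
    show ?thesis using cc_tail_le N that by simp
  qed
  show ?thesis
  proof (intro exI conjI)
    show "0 < exp (2 :: real)" by simp
    show "0 < tail_rate" by (rule tail_rate_pos)
    show "\<forall>n\<ge>max 1 N. \<forall>A. A \<subseteq> {..<n} \<longrightarrow>
        (\<forall>x::real. x \<ge> 0 \<longrightarrow> cc_tail \<alpha> \<beta> n A (x / cc_mu \<alpha> \<beta> n) \<le> exp 2 * exp (- tail_rate * x))"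
      using tail by blast
  qed
qed

end
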